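(* Let $\lambda\in\mathbb{C}^*$, $\alpha\in\mathbb{C}$, $t\in\{1,-1\}$, and let $\pi_t=x\mathbb{C}[x]\mathbf{1}_{\bar0}\oplus\mathbb{C}[y]\mathbf{1}_{\bar1}\subseteq\mathcal{N}_t(\lambda,0)$. Then: (1) $\mathcal{N}_t(\lambda,\alpha)$ is simple if and only if $\alpha\neq0$. In addition, $\pi_t$ is the unique nonzero proper submodule of $\mathcal{N}_t(\lambda,0)$, and $\mathcal{N}_t(\lambda,0)/\pi_t\cong\mathbb{C}$ (the one-dimensional trivial module). (2) $\pi_1\cong\Pi(\mathcal{N}_{-1}(\lambda,\frac12))$ and $\pi_{-1}\cong\Pi(\mathcal{N}_1(\lambda,\frac12))$, and these are simple $\mathcal{T}$-modules.
   Context: The twisted $N=2$ superconformal algebra $\mathcal{T}$ is the Lie superalgebra over $\mathbb{C}$ with basis $\{L_m, I_r, G_p\mid m\in\mathbb{Z}, r\in\frac12+\mathbb{Z}, p\in\frac12\mathbb{Z}\}$, even part spanned by the $L_m,I_r$, odd part by the $G_p$, only nonzero brackets $[L_m,L_n]=(m-n)L_{m+n}$, $[L_m,I_r]=-rI_{m+r}$, $[L_m,G_p]=(\frac m2-p)G_{m+p}$, $[I_r,G_p]=G_{r+p}$, $[G_p,G_q]=(-1)^{2p}2L_{p+q}$ if $p+q\in\mathbb{Z}$, $[G_p,G_q]=(-1)^{2p+1}(p-q)I_{p+q}$ if $p+q\in\frac12+\mathbb{Z}$. Modules are $\mathbb{Z}_2$-graded; $\Pi$ is the parity-change functor. For $p\in\frac12\mathbb{Z}$,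 $\lambda^p$ means $(\lambda^{1/2})^{2p}$ for a fixed square root. For $\lambda\in\mathbb{C}^*,\alpha\in\mathbb{C},t=\pm1$, $\mathcal{N}_t(\lambda,\alpha)$ is the space $\mathbb{C}[x]\mathbf{1}_{\bar0}\oplus\mathbb{C}[y]\mathbf{1}_{\bar1}$ (even part $\mathbb{C}[x]\mathbf{1}_{\bar0}$, odd part $\mathbb{C}[y]\mathbf{1}_{\bar1}$; write $f(x)$ for $f(x)\mathbf{1}_{\bar0}$, $g(y)$ for $g(y)\mathbf{1}_{\bar1}$) with $L_mf(x)=\lambda^m(x+m\alpha)f(x+m)$, $L_mg(y)=\lambda^m(y+m(\alpha+\frac12))g(y+m)$, $I_rf(x)=-2t^{2r}\lambda^r\alpha f(x+r)$, $I_rg(y)=t^{2r}\lambda^r(1-2\alpha)g(y+r)$, $G_pf(x)=t^{2p}\lambda^pf(y+p)$, $G_pg(y)=(-t)^{2p}\lambda^p(x+2p\alpha)g(x+p)$, for $m\in\mathbb{Z}$, $r\in\frac12+\mathbb{Z}$, $p\in\frac12\mathbb{Z}$. *)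

theory Defs
  imports Complex_Main "HOL-Computational_Algebra.Polynomial" "HOL-Library.Product_Plus"
begin

text \<open>Basis of the twisted N=2 superconformal algebra.
  L m      stands for L_m   (m integer),
  I k      stands for I_{k/2} (only meaningful for k odd, i.e. r in 1/2 + Z),
  G k      stands for G_{k/2} (k any integer, i.e. p in (1/2)Z).\<close>
datatype tbasis = L int | I int | G int

fun valid_basis :: "tbasis \<Rightarrow> bool" where
  "valid_basis (L m) = True"
| "valid_basis (I k) = odd k"
| "valid_basis (G k) = True"

text \<open>Elements of N_t(lam,alpha) = C[x]1_0 (+) C[y]1_1 are pairs (f, g):
  f the even component (polynomial in x), g the odd component (polynomial in y).\<close>
type_synonym nvec = "complex poly \<times> complex poly"

definition shift :: "int \<Rightarrow> complex poly \<Rightarrow> complex poly" where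
  "shift k f = pcompose f [:of_int k / 2, 1:]"

definition vscale :: "complex \<Rightarrow> nvec \<Rightarrow> nvec" where
  "vscale c v = (smult c (fst v), smult c (snd v))"

text \<open>The action of N_t(lam,alpha), where mu is the fixed square root of lam,
  so that lam^(k/2) = mu^k.\<close>
fun Nact :: "complex \<Rightarrow> complex \<Rightarrow> complex \<Rightarrow> tbasis \<Rightarrow> nvec \<Rightarrow> nvec" where
  "Nact t mu alpha (L m) (f, g) =
     (smult (mu powi (2*m)) ([:of_int m * alpha, 1:] * shift (2*m) f),
      smult (mu powi (2*m)) ([:of_int m * (alpha + 1/2), 1:] * shift (2*m) g))"
| "Nact t mu alpha (I k) (f, g) =
     (smult (- 2 * t powi k * mu powi k * alpha) (shift k f),
      smult (t powi k * mu powi k * (1 - 2 * alpha)) (shift k g))"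
| "Nact t mu alpha (G k) (f, g) =
     (smult ((- t) powi k * mu powi k) ([:of_int k * alpha, 1:] * shift k g),
      smult (t powi k * mu powi k) (shift k f))"

definition is_submod :: "(tbasis \<Rightarrow> nvec \<Rightarrow> nvec) \<Rightarrow> nvec set \<Rightarrow> bool" where
  "is_submod act W \<longleftrightarrow>
     0 \<in> W \<and> (\<forall>v\<in>W. \<forall>w\<in>W. v + w \<in> W) \<and> (\<forall>c. \<forall>v\<in>W. vscale c v \<in> W)
     \<and> (\<forall>b. \<forall>v\<in>W. valid_basis b \<longrightarrow> act b v \<in> W)
     \<and> (\<forall>f g. (f, g) \<in> W \<longrightarrow> (f, 0) \<in> W \<and> (0, g) \<in> W)"

definition simple_submod :: "(tbasis \<Rightarrow> nvec \<Rightarrow> nvec) \<Rightarrow> nvec set \<Rightarrow> bool" where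
  "simple_submod act V \<longleftrightarrow> is_submod act V \<and> V \<noteq> {0}
     \<and> (\<forall>W. is_submod act W \<and> W \<subseteq> V \<longrightarrow> W = {0} \<or> W = V)"

definition simple_mod :: "(tbasis \<Rightarrow> nvec \<Rightarrow> nvec) \<Rightarrow> bool" where
  "simple_mod act \<longleftrightarrow> simple_submod act UNIV"

definition pi_sub :: "nvec set" where
  "pi_sub = {(f, g). coeff f 0 = 0}"

text \<open>M/W is isomorphic to the one-dimensional trivial module C:
  there is a linear surjection onto C with kernel W, intertwining the action
  with the trivial (zero) action.\<close>
definition quot_is_trivial_C :: "(tbasis \<Rightarrow> nvec \<Rightarrow> nvec) \<Rightarrow> nvec set \<Rightarrow> bool" where
  "quot_is_trivial_C act W \<longleftrightarrow> (\<exists>\<phi> :: nvec \<Rightarrow> complex.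
     (\<forall>v w. \<phi> (v + w) = \<phi> v + \<phi> w) \<and> (\<forall>c v. \<phi> (vscale c v) = c * \<phi> v)
     \<and> surj \<phi> \<and> {v. \<phi> v = 0} = W
     \<and> (\<forall>b v. valid_basis b \<longrightarrow> \<phi> (act b v) = 0))"

text \<open>The submodule V of (the module with action) act1 is isomorphic to
  Pi(M2), M2 the module with action act2: an even isomorphism V -> Pi(M2),
  i.e. a linear bijection V -> M2 commuting with the action and
  interchanging parity.\<close>
definition parity_iso ::
  "(tbasis \<Rightarrow> nvec \<Rightarrow> nvec) \<Rightarrow> nvec set \<Rightarrow> (tbasis \<Rightarrow> nvec \<Rightarrow> nvec) \<Rightarrow> bool" where
  "parity_iso act1 V act2 \<longleftrightarrow> (\<exists>\<phi> :: nvec \<Rightarrow> nvec.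
     (\<forall>v\<in>V. \<forall>w\<in>V. \<phi> (v + w) = \<phi> v + \<phi> w) \<and> (\<forall>c. \<forall>v\<in>V. \<phi> (vscale c v) = vscale c (\<phi> v))
     \<and> bij_betw \<phi> V UNIV
     \<and> (\<forall>b. \<forall>v\<in>V. valid_basis b \<longrightarrow> \<phi> (act1 b v) = act2 b (\<phi> v))
     \<and> (\<forall>f. (f, 0) \<in> V \<longrightarrow> fst (\<phi> (f, 0)) = 0)
     \<and> (\<forall>g. (0, g) \<in> V \<longrightarrow> snd (\<phi> (0, g)) = 0))"

end

theory Submission imports Defs begin

(*
  On N_t(lam, alpha), L_0 multiplies both components by the variable, G_0 sends (f, g) to (x g, f),
  and I_{1/2} shifts both components by 1/2, scaling the even one by -2 t lam^(1/2) alpha and the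
  odd one by t lam^(1/2) (1 - 2 alpha). A nonzero subspace of C[x] stable under multiplication by x
  and under this shift is all of C[x]: the differences f(x + 1/2) - f(x) lower the degree, and stay
  nonzero because a nonconstant polynomial is not periodic, until a nonzero constant is reached. Hence for alpha <> 0 a nonzero graded submodule contains the whole
  even part, and by G_0 everything. For alpha = 0 the same argument applies to the odd part, and
  G_0 then shows that every nonzero submodule contains pi, which has codimension one. Finally
  (x f, g) |-> (g, f) intertwines pi in N_t(lam, 0) with Pi(N_{-t}(lam, 1/2)).
*)

lemma shift_0 [simp]: "shift 0 f = f"
  by (simp add: shift_def)

lemma shift_zero [simp]: "shift k 0 = 0"
  by (simp add: shift_def)

lemma shift_pCons_0: "shift k (pCons 0 h) = [:of_int k / 2, 1:] * shift k h"
  by (simp add: shift_def pcompose_pCons)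

lemma poly_shift: "poly (shift k f) z = poly f (z + of_int k / 2)"
  by (simp add: shift_def poly_pcompose add.commute)

lemma degree_shift [simp]: "degree (shift k f) = degree f"
  by (simp add: shift_def degree_pcompose)

lemma coeff_shift_degree: "coeff (shift k f) (degree f) = lead_coeff f"
  using lead_coeff_comp[of "[:of_int k / 2, 1:]" f] by (simp add: shift_def degree_pcompose)

lemma degree_0_if_shift_eq:
  assumes "k \<noteq> 0" and "shift k f = f"
  shows "degree f = 0"
proof -
  let ?z = "\<lambda>n::nat. of_nat n * (of_int k / 2 :: complex)"
  have "poly f (?z n) = poly f 0" for n
  proof (induction n)
    case (Suc n)
    have "poly f (?z (Suc n)) = poly (shift k f) (?z n)"
      by (simp add: poly_shift distrib_right add_divide_distrib add.commute)
    then show ?case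
      using assms(2) Suc.IH by simp
  qed simp
  then have "range ?z \<subseteq> {z. poly (f - [:poly f 0:]) z = 0}"
    by auto
  moreover have "infinite (range ?z)"
    using assms(1) by (intro range_inj_infinite) (auto simp: inj_on_def)
  ultimately have "f - [:poly f 0:] = 0"
    using poly_roots_finite finite_subset by blast
  then show ?thesis
    by (metis degree_pCons_0 eq_iff_diff_eq_0)
qed

lemma degree_shift_minus_less:
  assumes "degree f > 0"
  shows "degree (shift k f - f) < degree f"
proof -
  have "degree (shift k f - f) \<le> degree f"
    by (metis degree_diff_le degree_shift order_refl)
  moreover have "coeff (shift k f - f) (degree f) = 0"
    by (simp add: coeff_shift_degree)
  ultimately show ?thesis
    using assms by (metis degree_0 le_neq_implies_less leading_coeff_0_iff)
qed

lemma one_mem_if_shift_closed: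
  fixes S :: "complex poly set"
  assumes add: "\<And>f g. f \<in> S \<Longrightarrow> g \<in> S \<Longrightarrow> f + g \<in> S"
    and smult: "\<And>c f. f \<in> S \<Longrightarrow> smult c f \<in> S"
    and shift: "\<And>f. f \<in> S \<Longrightarrow> shift 1 f \<in> S"
    and "f \<in> S" "f \<noteq> 0"
  shows "1 \<in> S"
  using assms(4,5)
proof (induction "degree f" arbitrary: f rule: less_induct)
  case less
  show ?case
  proof (cases "degree f = 0")
    case True
    then obtain c where "f = [:c:]" "c \<noteq> 0"
      using less.prems by (metis degree_eq_zeroE pCons_eq_0_iff)
    then have "1 = smult (1 / c) f"
      by (simp add: one_pCons)
    then show ?thesis
      using smult less.prems by metis
  next
    case False
    have "shift 1 f - f \<in> S"
      using add[OF shift smult, of f f "-1"] less.prems by simp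
    moreover have "shift 1 f - f \<noteq> 0"
      using degree_0_if_shift_eq[of 1 f] False by auto
    moreover have "degree (shift 1 f - f) < degree f"
      using degree_shift_minus_less False by blast
    ultimately show ?thesis
      using less.hyps by blast
  qed
qed

lemma poly_mem_if_one_mem_and_x_closed:
  fixes S :: "'a::comm_semiring_1 poly set"
  assumes add: "\<And>f g. f \<in> S \<Longrightarrow> g \<in> S \<Longrightarrow> f + g \<in> S"
    and smult: "\<And>c f. f \<in> S \<Longrightarrow> smult c f \<in> S"
    and x: "\<And>f. f \<in> S \<Longrightarrow> pCons 0 f \<in> S"
    and "1 \<in> S"
  shows "p \<in> S"
proof (induction p)
  case 0
  show ?case
    using smult[OF \<open>1 \<in> S\<close>, of 0] by simp
next
  case (pCons a p)
  have "pCons a p = smult a 1 + pCons 0 p"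
    by (simp add: one_pCons)
  then show ?case
    using add[OF smult[OF \<open>1 \<in> S\<close>] x[OF pCons.IH]] by metis
qed

lemma shift_closed_poly_subspace_eq_UNIV:
  fixes S :: "complex poly set"
  assumes add: "\<And>f g. f \<in> S \<Longrightarrow> g \<in> S \<Longrightarrow> f + g \<in> S"
    and smult: "\<And>c f. f \<in> S \<Longrightarrow> smult c f \<in> S"
    and x: "\<And>f. f \<in> S \<Longrightarrow> pCons 0 f \<in> S"
    and shift: "\<And>f. f \<in> S \<Longrightarrow> shift 1 f \<in> S"
    and "f \<in> S" "f \<noteq> 0"
  shows "S = UNIV"
  using poly_mem_if_one_mem_and_x_closed[OF add smult x one_mem_if_shift_closed[OF add smult shift]]
    assms(5,6) by blast

lemma is_submodD:
  assumes "is_submod act W"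
  shows "(0, 0) \<in> W"
    and "v \<in> W \<Longrightarrow> w \<in> W \<Longrightarrow> v + w \<in> W"
    and "v \<in> W \<Longrightarrow> vscale c v \<in> W"
    and "v \<in> W \<Longrightarrow> valid_basis b \<Longrightarrow> act b v \<in> W"
    and "(f, g) \<in> W \<Longrightarrow> (f, 0) \<in> W"
    and "(f, g) \<in> W \<Longrightarrow> (0, g) \<in> W"
  using assms unfolding is_submod_def zero_prod_def by blast+

lemma submod_nonzero_components:
  assumes W: "is_submod (Nact t mu alpha) W" and "W \<noteq> {0}"
  obtains f g where "(f, 0) \<in> W" "f \<noteq> 0" "(0, g) \<in> W" "g \<noteq> 0"
proof -
  obtain f g where fg: "(f, g) \<in> W" "(f, g) \<noteq> (0, 0)"
    using assms(2) is_submodD(1)[OF W] by (auto simp: zero_prod_def)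
  show ?thesis
  proof (cases "f = 0")
    case True
    then have "(pCons 0 g, 0) \<in> W" "(0, g) \<in> W"
      using fg is_submodD(4)[OF W fg(1), of "G 0"] by (auto simp: shift_def)
    then show ?thesis
      using that True fg(2) by simp
  next
    case False
    then have "(f, 0) \<in> W" "(0, f) \<in> W"
      using is_submodD(5)[OF W fg(1)] is_submodD(4)[OF W, of "(f, 0)" "G 0"] by auto
    then show ?thesis
      using that False by simp
  qed
qed

lemma submod_contains_even_part:
  assumes W: "is_submod (Nact t mu alpha) W" and "t \<noteq> 0" "mu \<noteq> 0" "alpha \<noteq> 0"
    and "(f, 0) \<in> W" "f \<noteq> 0"
  shows "(p, 0) \<in> W"
proof -
  let ?S = "{f. (f, 0) \<in> W}"
  have "?S = UNIV"
  proof (rule shift_closed_poly_subspace_eq_UNIV)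
    show "f + g \<in> ?S" if "f \<in> ?S" "g \<in> ?S" for f g
      using is_submodD(2)[OF W, of "(f, 0)" "(g, 0)"] that by simp
    show "smult c f \<in> ?S" if "f \<in> ?S" for c f
      using is_submodD(3)[OF W, of "(f, 0)" c] that by (simp add: vscale_def)
    show "pCons 0 f \<in> ?S" if "f \<in> ?S" for f
      using is_submodD(4)[OF W, of "(f, 0)" "L 0"] that by simp
    show "shift 1 f \<in> ?S" if "f \<in> ?S" for f
    proof -
      have "(smult (- 2 * t * mu * alpha) (shift 1 f), 0) \<in> W"
        using is_submodD(4)[OF W, of "(f, 0)" "I 1"] that by simp
      from is_submodD(3)[OF W this, of "1 / (- 2 * t * mu * alpha)"] show ?thesis
        using assms(2-4) by (simp add: vscale_def)
    qed
  qed (use assms(5,6) in auto)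
  then show ?thesis
    by auto
qed

lemma submod_contains_odd_part:
  assumes W: "is_submod (Nact t mu alpha) W" and "t \<noteq> 0" "mu \<noteq> 0" "alpha \<noteq> 1 / 2"
    and "(0, g) \<in> W" "g \<noteq> 0"
  shows "(0, q) \<in> W"
proof -
  let ?S = "{g. (0, g) \<in> W}"
  have "?S = UNIV"
  proof (rule shift_closed_poly_subspace_eq_UNIV)
    show "f + g \<in> ?S" if "f \<in> ?S" "g \<in> ?S" for f g
      using is_submodD(2)[OF W, of "(0, f)" "(0, g)"] that by simp
    show "smult c g \<in> ?S" if "g \<in> ?S" for c g
      using is_submodD(3)[OF W, of "(0, g)" c] that by (simp add: vscale_def)
    show "pCons 0 g \<in> ?S" if "g \<in> ?S" for g
      using is_submodD(4)[OF W, of "(0, g)" "L 0"] that by simp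
    show "shift 1 g \<in> ?S" if "g \<in> ?S" for g
    proof -
      define c where "c = t * mu * (1 - 2 * alpha)"
      have "c \<noteq> 0"
        using assms(2-4) by (auto simp: c_def field_simps)
      have "(0, smult c (shift 1 g)) \<in> W"
        using is_submodD(4)[OF W, of "(0, g)" "I 1"] that by (simp add: c_def)
      from is_submodD(3)[OF W this, of "1 / c"] show ?thesis
        using \<open>c \<noteq> 0\<close> by (simp add: vscale_def)
    qed
  qed (use assms(5,6) in auto)
  then show ?thesis
    by auto
qed

lemma simple_mod_Nact:
  assumes "t \<noteq> 0" "mu \<noteq> 0" "alpha \<noteq> 0"
  shows "simple_mod (Nact t mu alpha)"
  unfolding simple_mod_def simple_submod_def
proof (intro conjI allI impI)
  show "is_submod (Nact t mu alpha) UNIV"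
    by (simp add: is_submod_def)
  show "(UNIV :: nvec set) \<noteq> {0}"
  proof
    assume "(UNIV :: nvec set) = {0}"
    then have "((1, 0) :: nvec) = 0"
      by blast
    then show False
      by (simp add: zero_prod_def)
  qed
  fix W assume "is_submod (Nact t mu alpha) W \<and> W \<subseteq> UNIV"
  then have W: "is_submod (Nact t mu alpha) W"
    by blast
  show "W = {0} \<or> W = UNIV"
  proof (cases "W = {0}")
    case False
    then obtain f where "(f, 0) \<in> W" "f \<noteq> 0"
      using submod_nonzero_components[OF W] by metis
    then have even: "(p, 0) \<in> W" for p
      using submod_contains_even_part[OF W assms] by blast
    have "(p, q) \<in> W" for p q
      using is_submodD(2)[OF W even is_submodD(4)[OF W even, of "G 0"]] by simp
    then show ?thesis
      by auto
  qed simp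
qed

lemma mem_pi_sub_iff: "v \<in> pi_sub \<longleftrightarrow> (\<exists>h g. v = (pCons 0 h, g))"
  by (cases v) (auto simp: pi_sub_def, metis coeff_pCons_0 pCons_cases)

lemma is_submod_pi_sub: "is_submod (Nact t mu 0) pi_sub"
  unfolding is_submod_def pi_sub_def zero_prod_def
proof (intro conjI allI ballI impI)
  fix b and v :: nvec
  assume "v \<in> {(f, g). coeff f 0 = 0}" "valid_basis b"
  then show "Nact t mu 0 b v \<in> {(f, g). coeff f 0 = 0}"
    by (cases b; cases v) (auto simp: coeff_pCons_0)
qed (auto simp: vscale_def)

lemma pi_sub_ne_0: "pi_sub \<noteq> {0}"
  and pi_sub_ne_UNIV: "pi_sub \<noteq> UNIV"
proof -
  have "(0, 1) \<in> pi_sub" "(1, 0) \<notin> pi_sub"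
    by (auto simp: pi_sub_def)
  then show "pi_sub \<noteq> {0}" "pi_sub \<noteq> UNIV"
    by (auto simp: zero_prod_def)
qed

lemma pi_sub_subset_submod:
  assumes W: "is_submod (Nact t mu 0) W" and "W \<noteq> {0}" "t \<noteq> 0" "mu \<noteq> 0"
  shows "pi_sub \<subseteq> W"
proof
  obtain g where "(0, g) \<in> W" "g \<noteq> 0"
    using submod_nonzero_components[OF W assms(2)] by metis
  then have odd: "(0, q) \<in> W" for q
    using submod_contains_odd_part[OF W assms(3,4)] by simp
  fix v assume "v \<in> pi_sub"
  then obtain h g where v: "v = (pCons 0 h, g)"
    by (auto simp: mem_pi_sub_iff)
  have "(pCons 0 h, 0) \<in> W"
    using is_submodD(4)[OF W odd, of "G 0"] by simp
  then show "v \<in> W"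
    using is_submodD(2)[OF W _ odd] v by fastforce
qed

lemma submod_Nact_0_cases:
  assumes W: "is_submod (Nact t mu 0) W" and "W \<noteq> {0}" "t \<noteq> 0" "mu \<noteq> 0"
  shows "W = pi_sub \<or> W = UNIV"
proof (cases "W \<subseteq> pi_sub")
  case True
  then show ?thesis
    using pi_sub_subset_submod[OF assms] by blast
next
  case False
  \<comment> \<open>pi is the kernel of the functional taking the constant term of the even part\<close>
  then obtain w where w: "w \<in> W" "coeff (fst w) 0 \<noteq> 0"
    unfolding pi_sub_def by fastforce
  have "v \<in> W" for v
  proof -
    define c where "c = coeff (fst v) 0 / coeff (fst w) 0"
    have "v - vscale c w \<in> pi_sub"
      using w(2) by (cases v; cases w) (simp add: pi_sub_def vscale_def c_def)
    then have "v - vscale c w \<in> W"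
      using pi_sub_subset_submod[OF assms] by blast
    from is_submodD(2)[OF W this is_submodD(3)[OF W w(1), of c]] show ?thesis
      by simp
  qed
  then show ?thesis
    by blast
qed

lemma simple_submod_pi_sub:
  assumes "t \<noteq> 0" "mu \<noteq> 0"
  shows "simple_submod (Nact t mu 0) pi_sub"
  using is_submod_pi_sub pi_sub_ne_0 submod_Nact_0_cases[OF _ _ assms] pi_sub_ne_UNIV
  unfolding simple_submod_def by blast

lemma quot_is_trivial_C_pi_sub: "quot_is_trivial_C (Nact t mu 0) pi_sub"
  unfolding quot_is_trivial_C_def
proof (intro exI[of _ "\<lambda>v. coeff (fst v) 0"] conjI allI impI)
  show "surj (\<lambda>v::nvec. coeff (fst v) 0)"
    by (rule surjI[of _ "\<lambda>c. ([:c:], 0)"]) simp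
  show "{v. coeff (fst v) 0 = 0} = pi_sub"
    by (auto simp: pi_sub_def)
  fix b and v :: nvec
  assume "valid_basis b"
  then show "coeff (fst (Nact t mu 0 b v)) 0 = 0"
    by (cases b; cases v) auto
qed (auto simp: vscale_def)

definition pi_iso :: "nvec \<Rightarrow> nvec" where
  "pi_iso v = (snd v, fst v div [:0, 1:])"

lemma pCons_0_div_x [simp]:
  fixes h :: "'a::field poly"
  shows "pCons 0 h div [:0, 1:] = h"
  using nonzero_mult_div_cancel_left[of "[:0, 1:]" h] by simp

lemma pi_iso_pCons_0 [simp]: "pi_iso (pCons 0 h, g) = (g, h)"
  by (simp add: pi_iso_def)

lemma pi_iso_Nact:
  assumes "valid_basis b"
  shows "pi_iso (Nact t mu 0 b (pCons 0 h, g)) = Nact (- t) mu (1 / 2) b (g, h)"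
proof (cases b)
  case (L m)
  then show ?thesis
    by (simp add: pi_iso_def shift_pCons_0)
next
  case (I k)
  then show ?thesis
    using assms by (simp add: pi_iso_def)
next
  case (G k)
  then show ?thesis
    by (simp add: pi_iso_def shift_pCons_0)
qed

lemma parity_iso_pi_sub: "parity_iso (Nact t mu 0) pi_sub (Nact (- t) mu (1 / 2))"
  unfolding parity_iso_def
proof (intro exI[of _ pi_iso] conjI ballI allI impI)
  show "bij_betw pi_iso pi_sub UNIV"
    by (rule bij_betw_byWitness[where f' = "\<lambda>(g, h). (pCons 0 h, g)"])
      (auto simp: mem_pi_sub_iff)
  fix b v assume "v \<in> pi_sub" "valid_basis b"
  then show "pi_iso (Nact t mu 0 b v) = Nact (- t) mu (1 / 2) b (pi_iso v)"
    using pi_iso_Nact by (auto simp: mem_pi_sub_iff)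
qed (auto simp: mem_pi_sub_iff vscale_def pi_iso_def)

theorem theorem2p10:
  fixes lam mu alpha t :: complex
  assumes "lam \<noteq> 0" and "mu ^ 2 = lam" and "t = 1 \<or> t = -1"
  shows "(simple_mod (Nact t mu alpha) \<longleftrightarrow> alpha \<noteq> 0)
    \<and> is_submod (Nact t mu 0) pi_sub \<and> pi_sub \<noteq> {0} \<and> pi_sub \<noteq> UNIV
    \<and> (\<forall>W. is_submod (Nact t mu 0) W \<and> W \<noteq> {0} \<and> W \<noteq> UNIV \<longrightarrow> W = pi_sub)
    \<and> quot_is_trivial_C (Nact t mu 0) pi_sub
    \<and> parity_iso (Nact 1 mu 0) pi_sub (Nact (-1) mu (1/2))
    \<and> parity_iso (Nact (-1) mu 0) pi_sub (Nact 1 mu (1/2))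
    \<and> simple_submod (Nact 1 mu 0) pi_sub
    \<and> simple_submod (Nact (-1) mu 0) pi_sub"
proof -
  have mu: "mu \<noteq> 0"
    using assms(1,2) by auto
  have t: "t \<noteq> 0"
    using assms(3) by auto
  have "\<not> simple_mod (Nact t mu 0)"
    using is_submod_pi_sub pi_sub_ne_0 pi_sub_ne_UNIV
    unfolding simple_mod_def simple_submod_def by blast
  then have "simple_mod (Nact t mu alpha) \<longleftrightarrow> alpha \<noteq> 0"
    using simple_mod_Nact[OF t mu] by blast
  then show ?thesis
    using is_submod_pi_sub pi_sub_ne_0 pi_sub_ne_UNIV submod_Nact_0_cases[OF _ _ t mu]
      quot_is_trivial_C_pi_sub parity_iso_pi_sub[of 1 mu] parity_iso_pi_sub[of "-1" mu]
      simple_submod_pi_sub[OF _ mu, of 1] simple_submod_pi_sub[OF _ mu, of "-1"]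
    by auto
qed

end
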